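(* Let $G$ and $H$ be connected graphs such that $G_{SR}$ and $H_{SR}$ are vertex-transitive. Then $$dim_s(G\square H)=\min\{|\partial(G)|\,dim_s(H),\ |\partial(H)|\,dim_s(G)\}.$$
   Context: Graphs are finite, simple, undirected; for connected $G$, $d_G$ is the shortest-path distance and $I_G[u,v]$ is the set of vertices lying on some shortest $u$–$v$ path. A vertex $w$ strongly resolves vertices $u,v$ if $v\in I_G[u,w]$ or $u\in I_G[v,w]$. A strong resolving set of $G$ is a set $S\subseteq V(G)$ such that every pair of vertices is strongly resolved by some vertex of $S$; $dim_s(G)$ is the minimum cardinality of such a set. A vertex $u$ is maximally distant from $v$ if $d_G(v,w)\le d_G(u,v)$ for every neighbor $w$ of $u$; distinct $u,v$ are mutually maximally distant if each is maximally distant from the other. The boundary $\partial(G)$ is the set of vertices mutually maximally distant with some vertex. The strong resolving graph $G_{SR}$ has vertex set $\partial(G)$, two vertices adjacent iff they are mutually maximally distant in $G$. $G\square H$ denotes the Cartesian product: vertex set $V(G)\times V(H)$, $(a,b)\sim(c,d)$ iff ($a=c$ and $bd\in E(H)$) or ($b=d$ and $ac\in E(G)$). *)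

theory Defs
  imports Main
begin

definition graph :: "'a set \<Rightarrow> ('a \<times> 'a) set \<Rightarrow> bool" where
  "graph V E \<longleftrightarrow> finite V \<and> E \<subseteq> V \<times> V \<and> sym E \<and> irrefl E"

definition connected_graph :: "'a set \<Rightarrow> ('a \<times> 'a) set \<Rightarrow> bool" where
  "connected_graph V E \<longleftrightarrow> graph V E \<and> (\<forall>u\<in>V. \<forall>v\<in>V. (u, v) \<in> E\<^sup>*)"

definition gdist :: "('a \<times> 'a) set \<Rightarrow> 'a \<Rightarrow> 'a \<Rightarrow> nat" where
  "gdist E u v = (LEAST n. (u, v) \<in> E ^^ n)"

definition interval :: "'a set \<Rightarrow> ('a \<times> 'a) set \<Rightarrow> 'a \<Rightarrow> 'a \<Rightarrow> 'a set" where
  "interval V E u v = {w \<in> V. gdist E u w + gdist E w v = gdist E u v}"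

definition strongly_resolves :: "'a set \<Rightarrow> ('a \<times> 'a) set \<Rightarrow> 'a \<Rightarrow> 'a \<Rightarrow> 'a \<Rightarrow> bool" where
  "strongly_resolves V E w u v \<longleftrightarrow> v \<in> interval V E u w \<or> u \<in> interval V E v w"

definition strong_resolving_set :: "'a set \<Rightarrow> ('a \<times> 'a) set \<Rightarrow> 'a set \<Rightarrow> bool" where
  "strong_resolving_set V E S \<longleftrightarrow> S \<subseteq> V \<and>
     (\<forall>u\<in>V. \<forall>v\<in>V. u \<noteq> v \<longrightarrow> (\<exists>w\<in>S. strongly_resolves V E w u v))"

definition strong_metric_dim :: "'a set \<Rightarrow> ('a \<times> 'a) set \<Rightarrow> nat" where
  "strong_metric_dim V E = (LEAST n. \<exists>S. strong_resolving_set V E S \<and> card S = n)"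

definition max_distant :: "'a set \<Rightarrow> ('a \<times> 'a) set \<Rightarrow> 'a \<Rightarrow> 'a \<Rightarrow> bool" where
  "max_distant V E u v \<longleftrightarrow> (\<forall>w. (u, w) \<in> E \<longrightarrow> gdist E v w \<le> gdist E u v)"

definition mutually_max_distant :: "'a set \<Rightarrow> ('a \<times> 'a) set \<Rightarrow> 'a \<Rightarrow> 'a \<Rightarrow> bool" where
  "mutually_max_distant V E u v \<longleftrightarrow> u \<in> V \<and> v \<in> V \<and> u \<noteq> v \<and>
     max_distant V E u v \<and> max_distant V E v u"

definition boundary :: "'a set \<Rightarrow> ('a \<times> 'a) set \<Rightarrow> 'a set" where
  "boundary V E = {u \<in> V. \<exists>v\<in>V. mutually_max_distant V E u v}"

text \<open>Edge relation of the strong resolving graph (its vertex set is boundary V E).\<close>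
definition sr_edges :: "'a set \<Rightarrow> ('a \<times> 'a) set \<Rightarrow> ('a \<times> 'a) set" where
  "sr_edges V E = {(u, v). u \<in> boundary V E \<and> v \<in> boundary V E \<and> mutually_max_distant V E u v}"

definition vertex_transitive :: "'a set \<Rightarrow> ('a \<times> 'a) set \<Rightarrow> bool" where
  "vertex_transitive V E \<longleftrightarrow> (\<forall>u\<in>V. \<forall>v\<in>V. \<exists>f. bij_betw f V V \<and>
     (\<forall>x\<in>V. \<forall>y\<in>V. (x, y) \<in> E \<longleftrightarrow> (f x, f y) \<in> E) \<and> f u = v)"

definition cart_edges :: "'a set \<Rightarrow> ('a \<times> 'a) set \<Rightarrow> 'b set \<Rightarrow> ('b \<times> 'b) set
    \<Rightarrow> (('a \<times> 'b) \<times> ('a \<times> 'b)) set" where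
  "cart_edges VG EG VH EH = {((a, b), (c, d)). a \<in> VG \<and> c \<in> VG \<and> b \<in> VH \<and> d \<in> VH \<and>
     ((a = c \<and> (b, d) \<in> EH) \<or> (b = d \<and> (a, c) \<in> EG))}"

end

theory Submission
  imports Defs "HOL-Library.FuncSet"
begin

text \<open>By Oellermann and Peters-Fransen, the strong resolving sets of a connected graph are exactly
  the vertex covers of its strong resolving graph, so dim_s(G) is the vertex cover number of G_SR.
  Distances in G \<box> H are sums of the distances in the factors, hence two vertices of G \<box> H are
  mutually maximally distant iff their coordinates are, i.e. (G \<box> H)_SR is the tensor product
  G_SR \<times> H_SR.  For vertex-transitive graphs A and B, Zhang's theorem
  \<alpha>(A \<times> B) = max (\<alpha>(A) |B|) (\<alpha>(B) |A|) on independence numbers gives, after complementing,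
  \<beta>(A \<times> B) = min (|A| \<beta>(B)) (|B| \<beta>(A)) for the vertex cover numbers.  Zhang's proof rests on the
  inequality |V| |X| \<le> \<alpha> |N[X]| for independent sets X of a vertex-transitive graph, obtained by
  averaging a maximum independent set over the automorphism group.\<close>

section \<open>Vertex covers and independent sets\<close>

definition independent_set :: "'a set \<Rightarrow> ('a \<times> 'a) set \<Rightarrow> 'a set \<Rightarrow> bool" where
  "independent_set V R J \<longleftrightarrow> J \<subseteq> V \<and> (\<forall>x\<in>J. \<forall>y\<in>J. (x, y) \<notin> R)"

definition vertex_cover :: "'a set \<Rightarrow> ('a \<times> 'a) set \<Rightarrow> 'a set \<Rightarrow> bool" where
  "vertex_cover V R S \<longleftrightarrow> S \<subseteq> V \<and> (\<forall>(x, y)\<in>R. x \<in> S \<or> y \<in> S)"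

definition cover_number :: "'a set \<Rightarrow> ('a \<times> 'a) set \<Rightarrow> nat" where
  "cover_number V R = (LEAST n. \<exists>S. vertex_cover V R S \<and> card S = n)"

definition closed_nbhd :: "('a \<times> 'a) set \<Rightarrow> 'a set \<Rightarrow> 'a set" where
  "closed_nbhd R A = A \<union> R `` A"

lemma cover_number_le:
  "vertex_cover V R S \<Longrightarrow> cover_number V R \<le> card S"
  unfolding cover_number_def by (blast intro: Least_le)

lemma vertex_cover_self: "R \<subseteq> V \<times> V \<Longrightarrow> vertex_cover V R V"
  unfolding vertex_cover_def by blast

lemma obtain_minimum_vertex_cover:
  assumes "R \<subseteq> V \<times> V"
  obtains S where "vertex_cover V R S" "card S = cover_number V R"
  using LeastI_ex[of "\<lambda>n. \<exists>S. vertex_cover V R S \<and> card S = n"] vertex_cover_self[OF assms]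
  unfolding cover_number_def by blast

lemma cover_number_le_card: "R \<subseteq> V \<times> V \<Longrightarrow> cover_number V R \<le> card V"
  by (rule cover_number_le[OF vertex_cover_self])

lemma vertex_cover_Diff_independent_set:
  "R \<subseteq> V \<times> V \<Longrightarrow> independent_set V R J \<Longrightarrow> vertex_cover V R (V - J)"
  unfolding vertex_cover_def independent_set_def by blast

lemma independent_set_Diff_vertex_cover:
  "vertex_cover V R S \<Longrightarrow> independent_set V R (V - S)"
  unfolding vertex_cover_def independent_set_def by blast

lemma card_independent_set_le:
  assumes "finite V" "R \<subseteq> V \<times> V" "independent_set V R J"
  shows "card J \<le> card V - cover_number V R"
proof -
  have "J \<subseteq> V" using assms(3) unfolding independent_set_def by blast
  then have "card (V - J) = card V - card J" "card J \<le> card V"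
    using assms(1) by (auto simp: card_Diff_subset finite_subset card_mono)
  moreover have "cover_number V R \<le> card (V - J)"
    using cover_number_le vertex_cover_Diff_independent_set assms(2,3) by blast
  ultimately show ?thesis by linarith
qed

lemma obtain_maximum_independent_set:
  assumes "finite V" "R \<subseteq> V \<times> V"
  obtains J where "independent_set V R J" "card J = card V - cover_number V R"
proof -
  obtain S where S: "vertex_cover V R S" "card S = cover_number V R"
    using obtain_minimum_vertex_cover[OF assms(2)] by blast
  have "S \<subseteq> V" using S(1) unfolding vertex_cover_def by blast
  then have "card (V - S) = card V - cover_number V R"
    using assms(1) S(2) by (simp add: card_Diff_subset finite_subset)
  then show ?thesis using that independent_set_Diff_vertex_cover[OF S(1)] by blast
qed

lemma closed_nbhd_subset: "R \<subseteq> V \<times> V \<Longrightarrow> A \<subseteq> V \<Longrightarrow> closed_nbhd R A \<subseteq> V"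
  unfolding closed_nbhd_def by blast

lemma cover_number_restrict:
  assumes "finite V" "B \<subseteq> V" "R \<subseteq> B \<times> B"
  shows "cover_number V R = cover_number B R"
proof (rule antisym)
  obtain S where S: "vertex_cover B R S" "card S = cover_number B R"
    using obtain_minimum_vertex_cover[OF assms(3)] .
  then have "vertex_cover V R S" using assms(2) unfolding vertex_cover_def by blast
  from cover_number_le[OF this] show "cover_number V R \<le> cover_number B R" unfolding S(2) .
next
  have "R \<subseteq> V \<times> V" using assms(2,3) by blast
  then obtain S where S: "vertex_cover V R S" "card S = cover_number V R"
    by (rule obtain_minimum_vertex_cover)
  then have "vertex_cover B R (S \<inter> B)" using assms(3) unfolding vertex_cover_def by blast
  then have "cover_number B R \<le> card (S \<inter> B)" by (rule cover_number_le)
  also have "\<dots> \<le> card S"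
    using S(1) assms(1) unfolding vertex_cover_def by (intro card_mono) (auto intro: finite_subset)
  finally show "cover_number B R \<le> cover_number V R" unfolding S(2) .
qed

section \<open>Vertex-transitive graphs\<close>

definition automorphisms :: "'a set \<Rightarrow> ('a \<times> 'a) set \<Rightarrow> ('a \<Rightarrow> 'a) set" where
  "automorphisms V R = {f \<in> V \<rightarrow>\<^sub>E V. bij_betw f V V \<and> (\<forall>x\<in>V. \<forall>y\<in>V. (x, y) \<in> R \<longleftrightarrow> (f x, f y) \<in> R)}"

lemma finite_automorphisms: "finite V \<Longrightarrow> finite (automorphisms V R)"
  unfolding automorphisms_def by (rule finite_subset[of _ "V \<rightarrow>\<^sub>E V"]) (auto intro: finite_PiE)

lemma restrict_in_automorphisms:
  assumes "bij_betw f V V" "\<forall>x\<in>V. \<forall>y\<in>V. (x, y) \<in> R \<longleftrightarrow> (f x, f y) \<in> R"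
  shows "restrict f V \<in> automorphisms V R"
  using assms bij_betwE unfolding automorphisms_def by (fastforce simp: bij_betw_restrict_eq)

lemma automorphismsD:
  assumes "f \<in> automorphisms V R"
  shows automorphism_in: "x \<in> V \<Longrightarrow> f x \<in> V"
    and automorphism_bij: "bij_betw f V V"
    and automorphism_preserves: "x \<in> V \<Longrightarrow> y \<in> V \<Longrightarrow> (x, y) \<in> R \<longleftrightarrow> (f x, f y) \<in> R"
    and automorphism_extensional: "f \<in> extensional V"
  using assms unfolding automorphisms_def by (auto simp: PiE_def)

lemma id_in_automorphisms: "restrict id V \<in> automorphisms V R"
  by (rule restrict_in_automorphisms) auto

lemma comp_in_automorphisms:
  assumes "f \<in> automorphisms V R" "g \<in> automorphisms V R"
  shows "restrict (f \<circ> g) V \<in> automorphisms V R"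
proof (rule restrict_in_automorphisms)
  show "bij_betw (f \<circ> g) V V"
    using assms by (blast intro: bij_betw_trans automorphism_bij)
  show "\<forall>x\<in>V. \<forall>y\<in>V. (x, y) \<in> R \<longleftrightarrow> ((f \<circ> g) x, (f \<circ> g) y) \<in> R"
  proof (intro ballI)
    fix x y assume "x \<in> V" "y \<in> V"
    then show "(x, y) \<in> R \<longleftrightarrow> ((f \<circ> g) x, (f \<circ> g) y) \<in> R"
      using automorphism_preserves[OF assms(2)] automorphism_preserves[OF assms(1)]
        automorphism_in[OF assms(2)] by simp
  qed
qed

lemma vertex_transitive_automorphism:
  assumes "vertex_transitive V R" "x \<in> V" "y \<in> V"
  obtains f where "f \<in> automorphisms V R" "f x = y"
proof -
  obtain f where "bij_betw f V V" "\<forall>a\<in>V. \<forall>b\<in>V. (a, b) \<in> R \<longleftrightarrow> (f a, f b) \<in> R" "f x = y"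
    using assms(1-3) unfolding vertex_transitive_def by blast
  then show ?thesis using that[of "restrict f V"] restrict_in_automorphisms[of f V R] assms(2) by simp
qed

lemma card_automorphisms_mapping_le:
  assumes "finite V" "vertex_transitive V R" "x \<in> V" "y \<in> V" "x' \<in> V" "y' \<in> V"
  shows "card {f \<in> automorphisms V R. f x = y} \<le> card {f \<in> automorphisms V R. f x' = y'}"
proof -
  let ?A = "automorphisms V R"
  obtain p where p: "p \<in> ?A" "p x' = x" using vertex_transitive_automorphism assms(2,5,3) .
  obtain q where q: "q \<in> ?A" "q y = y'" using vertex_transitive_automorphism assms(2,4,6) .
  define m where "m f = restrict (q \<circ> restrict (f \<circ> p) V) V" for f
  have m_apply: "m f z = q (f (p z))" if "z \<in> V" for f z
    using that unfolding m_def by simp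
  have "inj_on m {f \<in> ?A. f x = y}"
  proof (rule inj_onI)
    fix f1 f2 assume f12: "f1 \<in> {f \<in> ?A. f x = y}" "f2 \<in> {f \<in> ?A. f x = y}" and "m f1 = m f2"
    have "f1 (p z) = f2 (p z)" if "z \<in> V" for z
    proof -
      have in_V: "f1 (p z) \<in> V" "f2 (p z) \<in> V" and eq: "q (f1 (p z)) = q (f2 (p z))"
        using f12 automorphism_in[OF p(1) that] automorphism_in[of _ V R "p z"]
          \<open>m f1 = m f2\<close> m_apply[OF that, of f1] m_apply[OF that, of f2] by auto
      show ?thesis
        using inj_onD[OF bij_betw_imp_inj_on[OF automorphism_bij[OF q(1)]] eq in_V] .
    qed
    moreover have "p ` V = V" using bij_betw_imp_surj_on[OF automorphism_bij[OF p(1)]] .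
    ultimately have "\<forall>v\<in>V. f1 v = f2 v" by (metis imageE)
    then show "f1 = f2"
      using f12 automorphism_extensional[of f1 V R] automorphism_extensional[of f2 V R]
      by (intro extensionalityI[of _ V]) auto
  qed
  moreover have "m ` {f \<in> ?A. f x = y} \<subseteq> {f \<in> ?A. f x' = y'}"
  proof (rule image_subsetI)
    fix f assume f: "f \<in> {f \<in> ?A. f x = y}"
    have "m f \<in> ?A" unfolding m_def using p(1) q(1) f by (auto intro!: comp_in_automorphisms)
    moreover have "m f x' = y'" using m_apply[OF assms(5)] p(2) q(2) f by simp
    ultimately show "m f \<in> {f \<in> ?A. f x' = y'}" by blast
  qed
  ultimately show ?thesis
    using finite_automorphisms[OF assms(1)] by (intro card_inj_on_le) auto
qed

lemma card_automorphisms_mapping_into: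
  assumes "finite V" "vertex_transitive V R" "x \<in> V" "z \<in> V" "N \<subseteq> V"
  shows "card {f \<in> automorphisms V R. f x \<in> N} = card N * card {f \<in> automorphisms V R. f z = z}"
proof -
  let ?A = "automorphisms V R"
  have fin: "finite ?A" "finite N" using assms(1,5) finite_automorphisms finite_subset by auto
  have "{y \<in> N. f x = y} = (if f x \<in> N then {f x} else {})" for f
    by auto
  then have "card {y \<in> N. f x = y} = (if f x \<in> N then 1 else 0)" for f
    by simp
  then have "card {f \<in> ?A. f x \<in> N} = (\<Sum>f\<in>?A. card {y \<in> N. f x = y})"
    using fin by (simp add: sum.If_cases Int_def)
  also have "\<dots> = (\<Sum>y\<in>N. card {f \<in> ?A. f x = y})"
    using fin by (rule sum_multicount_gen) simp
  also have "\<dots> = card N * card {f \<in> ?A. f z = z}"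
  proof -
    have "card {f \<in> ?A. f x = y} = card {f \<in> ?A. f z = z}" if "y \<in> N" for y
      using that assms card_automorphisms_mapping_le[of V R x y z z]
        card_automorphisms_mapping_le[of V R z z x y] by auto
    then show ?thesis by simp
  qed
  finally show ?thesis .
qed

text \<open>The vertices of I that f maps outside N[A], moved by f, form together with A an independent
  set, which is no larger than the maximum independent set I.\<close>
lemma card_independent_set_le_preimage:
  assumes "finite V" "sym R" "R \<subseteq> V \<times> V" "f \<in> automorphisms V R"
    and I: "independent_set V R I" "card I = card V - cover_number V R"
    and A: "independent_set V R A"
  shows "card A \<le> card {x \<in> I. f x \<in> closed_nbhd R A}"
proof -
  define N where "N = closed_nbhd R A"
  define K where "K = {x \<in> I. f x \<notin> N}"
  have "I \<subseteq> V" "A \<subseteq> V" using I(1) A unfolding independent_set_def by auto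
  then have "finite A" "finite I" using assms(1) finite_subset by auto
  then have fin: "finite K" "finite A" "finite I" unfolding K_def by auto
  have "K \<subseteq> V" using \<open>I \<subseteq> V\<close> unfolding K_def by blast
  have "independent_set V R (f ` K \<union> A)"
    unfolding independent_set_def
  proof (intro conjI ballI notI)
    show "f ` K \<union> A \<subseteq> V" using \<open>K \<subseteq> V\<close> \<open>A \<subseteq> V\<close> automorphism_in[OF assms(4)] by blast
    fix a b assume a: "a \<in> f ` K \<union> A" and b: "b \<in> f ` K \<union> A" and ab: "(a, b) \<in> R"
    then have ba: "(b, a) \<in> R" using assms(2) by (meson symD)
    have "R `` A \<subseteq> N" unfolding N_def closed_nbhd_def by blast
    then consider "a \<in> f ` K" "b \<in> f ` K" | "a \<in> A" "b \<in> A"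
      using a b ab ba unfolding K_def by blast
    then show False
    proof cases
      case 1
      then obtain x y where "x \<in> K" "y \<in> K" "a = f x" "b = f y" by blast
      then show False
        using ab I(1) \<open>K \<subseteq> V\<close> automorphism_preserves[OF assms(4), of x y]
        unfolding K_def independent_set_def by auto
    next
      case 2
      then show False using A ab unfolding independent_set_def by blast
    qed
  qed
  then have "card (f ` K \<union> A) \<le> card I" using card_independent_set_le[OF assms(1,3)] I(2) by simp
  moreover have "f ` K \<inter> A = {}" unfolding K_def N_def closed_nbhd_def by blast
  moreover have "card (f ` K) = card K"
    using \<open>K \<subseteq> V\<close> bij_betw_imp_inj_on[OF automorphism_bij[OF assms(4)]]
    by (meson card_image inj_on_subset)
  moreover have "card I = card K + card {x \<in> I. f x \<in> N}"
  proof -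
    have "I = K \<union> {x \<in> I. f x \<in> N}" unfolding K_def by blast
    then show ?thesis using fin(3) unfolding K_def by (metis (no_types, lifting) card_Un_disjoint
        disjoint_iff finite_Un mem_Collect_eq)
  qed
  moreover have "card (f ` K \<union> A) = card (f ` K) + card A"
    using fin \<open>f ` K \<inter> A = {}\<close> by (simp add: card_Un_disjoint)
  ultimately show ?thesis unfolding N_def by linarith
qed

text \<open>Averaging the previous lemma over all automorphisms: a vertex-transitive graph moves a
  maximum independent set uniformly over its vertices.\<close>
lemma card_independent_set_mult_le:
  assumes fin: "finite V" and "sym R" "R \<subseteq> V \<times> V" and vt: "vertex_transitive V R"
    and A: "independent_set V R A"
  shows "card V * card A \<le> (card V - cover_number V R) * card (closed_nbhd R A)"
proof (cases "V = {}")
  case True then show ?thesis by simp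
next
  case False
  then obtain z where z: "z \<in> V" by blast
  define Aut where "Aut = automorphisms V R"
  define N where "N = closed_nbhd R A"
  define c where "c = card {f \<in> Aut. f z = z}"
  obtain I where I: "independent_set V R I" "card I = card V - cover_number V R"
    using obtain_maximum_independent_set[OF fin assms(3)] .
  have "I \<subseteq> V" "N \<subseteq> V" using I(1) A assms(3) unfolding independent_set_def N_def closed_nbhd_def by auto
  have "finite Aut" "finite I" using finite_automorphisms[OF fin] fin \<open>I \<subseteq> V\<close> finite_subset
    unfolding Aut_def by auto
  have "restrict id V \<in> {f \<in> Aut. f z = z}" using id_in_automorphisms z unfolding Aut_def by simp
  then have "c > 0" unfolding c_def using \<open>finite Aut\<close> by (auto simp: card_gt_0_iff)
  have "{f \<in> Aut. f z \<in> V} = Aut" using automorphism_in[of _ V R z] z unfolding Aut_def by blast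
  then have "c * (card V * card A) = card Aut * card A"
    using card_automorphisms_mapping_into[OF fin vt z z subset_refl] unfolding Aut_def c_def by simp
  also have "\<dots> = (\<Sum>f\<in>Aut. card A)" by simp
  also have "\<dots> \<le> (\<Sum>f\<in>Aut. card {x \<in> I. f x \<in> N})"
    using card_independent_set_le_preimage[OF fin assms(2,3) _ I A] unfolding Aut_def N_def
    by (intro sum_mono) blast
  also have "\<dots> = (\<Sum>x\<in>I. card {f \<in> Aut. f x \<in> N})"
    using \<open>finite Aut\<close> \<open>finite I\<close> by (rule sum_multicount_gen) simp
  also have "\<dots> = (\<Sum>x\<in>I. card N * c)"
  proof (rule sum.cong)
    fix x assume "x \<in> I"
    then show "card {f \<in> Aut. f x \<in> N} = card N * c"
      using card_automorphisms_mapping_into[OF fin vt _ z \<open>N \<subseteq> V\<close>, of x] \<open>I \<subseteq> V\<close>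
      unfolding Aut_def c_def by blast
  qed simp
  also have "\<dots> = c * ((card V - cover_number V R) * card N)" using I(2) by simp
  finally show ?thesis using \<open>c > 0\<close> unfolding N_def by simp
qed

section \<open>Tensor products\<close>

definition tensor_rel :: "('a \<times> 'a) set \<Rightarrow> ('b \<times> 'b) set \<Rightarrow> (('a \<times> 'b) \<times> ('a \<times> 'b)) set" where
  "tensor_rel RA RB = {((a, b), (a', b')). (a, a') \<in> RA \<and> (b, b') \<in> RB}"

lemma tensor_rel_subset:
  "RA \<subseteq> VA \<times> VA \<Longrightarrow> RB \<subseteq> VB \<times> VB \<Longrightarrow> tensor_rel RA RB \<subseteq> (VA \<times> VB) \<times> (VA \<times> VB)"
  unfolding tensor_rel_def by blast

lemma vertex_cover_tensor_rel_left:
  "vertex_cover VA RA C \<Longrightarrow> RB \<subseteq> VB \<times> VB \<Longrightarrow> vertex_cover (VA \<times> VB) (tensor_rel RA RB) (C \<times> VB)"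
  unfolding vertex_cover_def tensor_rel_def by blast

lemma vertex_cover_tensor_rel_right:
  "RA \<subseteq> VA \<times> VA \<Longrightarrow> vertex_cover VB RB C \<Longrightarrow> vertex_cover (VA \<times> VB) (tensor_rel RA RB) (VA \<times> C)"
  unfolding vertex_cover_def tensor_rel_def by blast

lemma card_subset_Times_fibres:
  assumes "finite VA" "finite VB" "X \<subseteq> VA \<times> VB"
  shows "card X = (\<Sum>g\<in>VA. card {h. (g, h) \<in> X})"
    and "card X = (\<Sum>h\<in>VB. card {g. (g, h) \<in> X})"
proof -
  have fibre: "{h. (g, h) \<in> X} = {h \<in> VB. (g, h) \<in> X}" "{g. (g, h) \<in> X} = {g \<in> VA. (g, h) \<in> X}"
    for g h using assms(3) by auto
  have "X = (SIGMA g:VA. {h \<in> VB. (g, h) \<in> X})" using assms(3) by blast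
  then have "card X = card (SIGMA g:VA. {h \<in> VB. (g, h) \<in> X})" by (rule arg_cong)
  also have "\<dots> = (\<Sum>g\<in>VA. card {h \<in> VB. (g, h) \<in> X})"
    using assms(1,2) by (intro card_SigmaI) auto
  finally show first: "card X = (\<Sum>g\<in>VA. card {h. (g, h) \<in> X})" unfolding fibre .
  show "card X = (\<Sum>h\<in>VB. card {g. (g, h) \<in> X})"
    unfolding first fibre using assms(1,2) by (rule sum_multicount_gen) simp
qed

text \<open>The pairs (g, h) with g \<in> N1 h and those with h \<in> N2 g are disjoint subsets of VA \<times> VB.\<close>
lemma sum_card_incidences_le:
  assumes fin: "finite VA" "finite VB" and "\<And>h. N1 h \<subseteq> VA" "\<And>g. N2 g \<subseteq> VB"
    and disjoint: "\<And>g h. \<not> (g \<in> N1 h \<and> h \<in> N2 g)"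
  shows "(\<Sum>h\<in>VB. card (N1 h)) + (\<Sum>g\<in>VA. card (N2 g)) \<le> card VA * card VB"
proof -
  have "(\<Sum>h\<in>VB. card (N1 h)) = (\<Sum>h\<in>VB. card {g \<in> VA. g \<in> N1 h})"
    using assms(3) by (intro sum.cong) (auto intro: arg_cong[of _ _ card])
  also have "\<dots> = (\<Sum>g\<in>VA. card {h \<in> VB. g \<in> N1 h})"
    using fin by (intro sum_multicount_gen[symmetric]) auto
  finally have "(\<Sum>h\<in>VB. card (N1 h)) + (\<Sum>g\<in>VA. card (N2 g))
      = (\<Sum>g\<in>VA. card {h \<in> VB. g \<in> N1 h} + card (N2 g))"
    by (simp add: sum.distrib)
  also have "\<dots> \<le> (\<Sum>g\<in>VA. card VB)"
  proof (rule sum_mono)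
    fix g
    have "{h \<in> VB. g \<in> N1 h} \<inter> N2 g = {}" using disjoint by blast
    then have "card {h \<in> VB. g \<in> N1 h} + card (N2 g) = card ({h \<in> VB. g \<in> N1 h} \<union> N2 g)"
      using fin(2) assms(4)[of g] by (simp add: card_Un_disjoint finite_subset)
    also have "\<dots> \<le> card VB" using fin(2) assms(4)[of g] by (intro card_mono) auto
    finally show "card {h \<in> VB. g \<in> N1 h} + card (N2 g) \<le> card VB" .
  qed
  finally show ?thesis by simp
qed

lemma tensor_independent_set_split:
  assumes "sym RB" and I: "independent_set (VA \<times> VB) (tensor_rel RA RB) I"
  defines "I1 \<equiv> {(g, h) \<in> I. \<exists>h'. (g, h') \<in> I \<and> (h, h') \<in> RB}"
  shows "independent_set VA RA {g. (g, h) \<in> I1}"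
    and "independent_set VB RB {h. (g, h) \<in> I - I1}"
    and "\<not> (g \<in> closed_nbhd RA {g. (g, h) \<in> I1} \<and> h \<in> closed_nbhd RB {h. (g, h) \<in> I - I1})"
proof -
  have edge: "(g, h) \<notin> I \<or> (g', h') \<notin> I" if "(g, g') \<in> RA" "(h, h') \<in> RB" for g g' h h'
    using I that unfolding independent_set_def tensor_rel_def by blast
  have symB: "(h', h) \<in> RB" if "(h, h') \<in> RB" for h h' using assms(1) that by (meson symD)
  have "I \<subseteq> VA \<times> VB" using I unfolding independent_set_def by blast
  show "independent_set VA RA {g. (g, h) \<in> I1}"
    unfolding independent_set_def I1_def using \<open>I \<subseteq> VA \<times> VB\<close> edge symB by blast
  show "independent_set VB RB {h. (g, h) \<in> I - I1}"
    unfolding independent_set_def I1_def using \<open>I \<subseteq> VA \<times> VB\<close> by blast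
  show "\<not> (g \<in> closed_nbhd RA {g. (g, h) \<in> I1} \<and> h \<in> closed_nbhd RB {h. (g, h) \<in> I - I1})"
  proof
    assume "g \<in> closed_nbhd RA {g. (g, h) \<in> I1} \<and> h \<in> closed_nbhd RB {h. (g, h) \<in> I - I1}"
    then obtain g1 h2 where g1: "(g1, h) \<in> I1" "g1 = g \<or> (g1, g) \<in> RA"
      and h2: "(g, h2) \<in> I - I1" "h2 = h \<or> (h2, h) \<in> RB"
      unfolding closed_nbhd_def by blast
    from g1(1) obtain h' where h': "(g1, h') \<in> I" "(h, h') \<in> RB" "(g1, h) \<in> I"
      unfolding I1_def by blast
    show False
    proof (cases "h2 = h")
      case True
      then show False using g1 h2 h' edge[of g1 g h' h] symB unfolding I1_def by blast
    next
      case False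
      then have "(h, h2) \<in> RB" using h2(2) symB by blast
      then show False using g1 h2 h' edge[of g1 g h h2] unfolding I1_def by blast
    qed
  qed
qed

text \<open>Summing the bounds of the factors over the columns of I1 and the rows of I - I1; by the
  disjointness in the split lemma the closed neighbourhoods involved fit into VA \<times> VB.\<close>
lemma card_independent_set_tensor_le:
  assumes fin: "finite VA" "finite VB" and "sym RB" "RA \<subseteq> VA \<times> VA" "RB \<subseteq> VB \<times> VB"
    and boundA: "\<And>X. independent_set VA RA X \<Longrightarrow> card VA * card X \<le> \<alpha>A * card (closed_nbhd RA X)"
    and boundB: "\<And>X. independent_set VB RB X \<Longrightarrow> card VB * card X \<le> \<alpha>B * card (closed_nbhd RB X)"
    and I: "independent_set (VA \<times> VB) (tensor_rel RA RB) I"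
  shows "card I \<le> max (\<alpha>A * card VB) (\<alpha>B * card VA)"
proof -
  define I1 where "I1 = {(g, h) \<in> I. \<exists>h'. (g, h') \<in> I \<and> (h, h') \<in> RB}"
  define N1 where "N1 h = closed_nbhd RA {g. (g, h) \<in> I1}" for h
  define N2 where "N2 g = closed_nbhd RB {h. (g, h) \<in> I - I1}" for g
  define M where "M = max (\<alpha>A * card VB) (\<alpha>B * card VA)"
  note split = tensor_independent_set_split[OF assms(3) I, folded I1_def]
  have "I \<subseteq> VA \<times> VB" using I unfolding independent_set_def by blast
  then have I1: "I1 \<subseteq> VA \<times> VB" and I2: "I - I1 \<subseteq> VA \<times> VB" unfolding I1_def by auto
  have "N1 h \<subseteq> VA" for h
    using closed_nbhd_subset[OF assms(4)] split(1) unfolding N1_def independent_set_def by blast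
  have "N2 g \<subseteq> VB" for g
    using closed_nbhd_subset[OF assms(5)] split(2) unfolding N2_def independent_set_def by blast
  have disjoint: "(\<Sum>h\<in>VB. card (N1 h)) + (\<Sum>g\<in>VA. card (N2 g)) \<le> card VA * card VB"
    using fin \<open>\<And>h. N1 h \<subseteq> VA\<close> \<open>\<And>g. N2 g \<subseteq> VB\<close> split(3) unfolding N1_def N2_def
    by (rule sum_card_incidences_le)
  have "card VA * card I1 = (\<Sum>h\<in>VB. card VA * card {g. (g, h) \<in> I1})"
    using card_subset_Times_fibres(2)[OF fin I1] by (simp add: sum_distrib_left)
  also have "\<dots> \<le> \<alpha>A * (\<Sum>h\<in>VB. card (N1 h))"
    unfolding N1_def sum_distrib_left using split(1) by (intro sum_mono boundA)
  finally have 1: "card VA * card I1 \<le> \<alpha>A * (\<Sum>h\<in>VB. card (N1 h))" .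
  have "card VB * card (I - I1) = (\<Sum>g\<in>VA. card VB * card {h. (g, h) \<in> I - I1})"
    using card_subset_Times_fibres(1)[OF fin I2] by (simp add: sum_distrib_left)
  also have "\<dots> \<le> \<alpha>B * (\<Sum>g\<in>VA. card (N2 g))"
    unfolding N2_def sum_distrib_left using split(2) by (intro sum_mono boundB)
  finally have 2: "card VB * card (I - I1) \<le> \<alpha>B * (\<Sum>g\<in>VA. card (N2 g))" .
  have "finite I" using fin \<open>I \<subseteq> VA \<times> VB\<close> finite_subset by blast
  moreover have "I \<inter> I1 = I1" unfolding I1_def by blast
  ultimately have "card I = card I1 + card (I - I1)" using card_Int_Diff by metis
  then have "(card VA * card VB) * card I = card VB * (card VA * card I1) + card VA * (card VB * card (I - I1))"
    by (simp add: algebra_simps)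
  also have "\<dots> \<le> M * (\<Sum>h\<in>VB. card (N1 h)) + M * (\<Sum>g\<in>VA. card (N2 g))"
  proof (rule add_mono)
    have "card VB * (card VA * card I1) \<le> (\<alpha>A * card VB) * (\<Sum>h\<in>VB. card (N1 h))"
      using mult_le_mono2[OF 1, of "card VB"] by (simp add: ac_simps)
    then show "card VB * (card VA * card I1) \<le> M * (\<Sum>h\<in>VB. card (N1 h))"
      unfolding M_def by (meson max.cobounded1 mult_le_mono1 order_trans)
    have "card VA * (card VB * card (I - I1)) \<le> (\<alpha>B * card VA) * (\<Sum>g\<in>VA. card (N2 g))"
      using mult_le_mono2[OF 2, of "card VA"] by (simp add: ac_simps)
    then show "card VA * (card VB * card (I - I1)) \<le> M * (\<Sum>g\<in>VA. card (N2 g))"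
      unfolding M_def by (meson max.cobounded2 mult_le_mono1 order_trans)
  qed
  also have "\<dots> \<le> (card VA * card VB) * M"
    using mult_le_mono2[OF disjoint, of M] by (simp add: algebra_simps)
  finally show ?thesis
    using \<open>I \<subseteq> VA \<times> VB\<close> unfolding M_def by (cases "card VA * card VB = 0") (auto simp: fin card_gt_0_iff)
qed

lemma cover_number_tensor_rel_le:
  assumes sub: "RA \<subseteq> VA \<times> VA" "RB \<subseteq> VB \<times> VB"
  shows "cover_number (VA \<times> VB) (tensor_rel RA RB)
           \<le> min (card VA * cover_number VB RB) (card VB * cover_number VA RA)"
proof -
  obtain CA where CA: "vertex_cover VA RA CA" "card CA = cover_number VA RA"
    using obtain_minimum_vertex_cover[OF sub(1)] .
  obtain CB where CB: "vertex_cover VB RB CB" "card CB = cover_number VB RB"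
    using obtain_minimum_vertex_cover[OF sub(2)] .
  have "cover_number (VA \<times> VB) (tensor_rel RA RB) \<le> card (VA \<times> CB)"
    by (rule cover_number_le[OF vertex_cover_tensor_rel_right[OF sub(1) CB(1)]])
  moreover have "cover_number (VA \<times> VB) (tensor_rel RA RB) \<le> card (CA \<times> VB)"
    by (rule cover_number_le[OF vertex_cover_tensor_rel_left[OF CA(1) sub(2)]])
  ultimately show ?thesis using CA(2) CB(2) by (simp add: card_cartesian_product mult.commute)
qed

lemma cover_number_tensor_rel:
  assumes fin: "finite VA" "finite VB" and sym: "sym RA" "sym RB"
    and sub: "RA \<subseteq> VA \<times> VA" "RB \<subseteq> VB \<times> VB"
    and vt: "vertex_transitive VA RA" "vertex_transitive VB RB"
  shows "cover_number (VA \<times> VB) (tensor_rel RA RB)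
           = min (card VA * cover_number VB RB) (card VB * cover_number VA RA)"
proof (rule antisym[OF cover_number_tensor_rel_le[OF sub]])
  obtain S where S: "vertex_cover (VA \<times> VB) (tensor_rel RA RB) S"
      "card S = cover_number (VA \<times> VB) (tensor_rel RA RB)"
    using obtain_minimum_vertex_cover[OF tensor_rel_subset[OF sub]] .
  let ?P = "card VA * card VB" and ?a = "cover_number VA RA * card VB"
    and ?b = "cover_number VB RB * card VA"
  have "card (VA \<times> VB - S) \<le> max ((card VA - cover_number VA RA) * card VB)
                                  ((card VB - cover_number VB RB) * card VA)"
    using card_independent_set_tensor_le[OF fin sym(2) sub
        card_independent_set_mult_le[OF fin(1) sym(1) sub(1) vt(1)]
        card_independent_set_mult_le[OF fin(2) sym(2) sub(2) vt(2)]
        independent_set_Diff_vertex_cover[OF S(1)]] .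
  also have "\<dots> = max (?P - ?a) (?P - ?b)" by (simp add: diff_mult_distrib diff_mult_distrib2 ac_simps)
  finally have "card (VA \<times> VB - S) \<le> max (?P - ?a) (?P - ?b)" .
  moreover have "card S + card (VA \<times> VB - S) = ?P"
  proof -
    have "(VA \<times> VB) \<inter> S = S" using S(1) unfolding vertex_cover_def by blast
    then show ?thesis using card_Int_Diff[of "VA \<times> VB" S] fin by (simp add: card_cartesian_product)
  qed
  moreover have "?a \<le> ?P" "?b \<le> ?P"
    using cover_number_le_card[OF sub(1)] cover_number_le_card[OF sub(2)] by simp_all
  moreover have "min b a \<le> s" if "i \<le> max (P - a) (P - b)" "s + i = P" "a \<le> P" "b \<le> P"
    for P a b i s :: nat
    using that by linarith
  ultimately have "min ?b ?a \<le> card S" by blast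
  then show "min (card VA * cover_number VB RB) (card VB * cover_number VA RA)
      \<le> cover_number (VA \<times> VB) (tensor_rel RA RB)"
    using S(2) by (simp add: mult.commute)
qed

section \<open>Graph distance\<close>

lemma relpow_sym: "sym E \<Longrightarrow> (u, v) \<in> E ^^ n \<Longrightarrow> (v, u) \<in> E ^^ n"
proof (induction n arbitrary: v)
  case (Suc n)
  then obtain y where "(u, y) \<in> E ^^ n" "(y, v) \<in> E" by auto
  then show ?case using Suc by (meson relpow_Suc_I2 symD)
qed simp

lemma connected_graph_edges_subset: "connected_graph V E \<Longrightarrow> E \<subseteq> V \<times> V"
  unfolding connected_graph_def graph_def by blast

lemma connected_graph_finite: "connected_graph V E \<Longrightarrow> finite V"
  unfolding connected_graph_def graph_def by blast

lemma gdist_le_relpow: "(u, v) \<in> E ^^ n \<Longrightarrow> gdist E u v \<le> n"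
  unfolding gdist_def by (rule Least_le)

lemma relpow_gdist:
  assumes "connected_graph V E" "u \<in> V" "v \<in> V"
  shows "(u, v) \<in> E ^^ gdist E u v"
proof -
  have "(u, v) \<in> E\<^sup>*" using assms unfolding connected_graph_def by blast
  then obtain n where "(u, v) \<in> E ^^ n" using rtrancl_power by blast
  then show ?thesis unfolding gdist_def by (rule LeastI)
qed

lemma gdist_self [simp]: "gdist E u u = 0"
  unfolding gdist_def by (rule Least_eq_0) simp

lemma gdist_eq_0_iff:
  assumes "connected_graph V E" "u \<in> V" "v \<in> V"
  shows "gdist E u v = 0 \<longleftrightarrow> u = v"
proof
  show "gdist E u v = 0 \<Longrightarrow> u = v" using relpow_gdist[OF assms] by simp
qed simp

lemma gdist_commute:
  assumes "connected_graph V E" "u \<in> V" "v \<in> V"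
  shows "gdist E u v = gdist E v u"
proof -
  have "sym E" using assms(1) unfolding connected_graph_def graph_def by blast
  then have "gdist E v u \<le> gdist E u v" "gdist E u v \<le> gdist E v u"
    using relpow_sym relpow_gdist[OF assms] relpow_gdist[OF assms(1,3,2)] gdist_le_relpow
    by (metis, metis)
  then show ?thesis by simp
qed

lemma gdist_triangle:
  assumes "connected_graph V E" "u \<in> V" "v \<in> V" "w \<in> V"
  shows "gdist E u w \<le> gdist E u v + gdist E v w"
proof -
  have "(u, w) \<in> E ^^ (gdist E u v + gdist E v w)"
    unfolding relpow_add using relpow_gdist[OF assms(1-3)] relpow_gdist[OF assms(1,3,4)] by blast
  then show ?thesis by (rule gdist_le_relpow)
qed

lemma gdist_edge_le:
  assumes "connected_graph V E" "u \<in> V" "(x, y) \<in> E"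
  shows "gdist E u y \<le> gdist E u x + 1"
proof -
  have "x \<in> V" using connected_graph_edges_subset[OF assms(1)] assms(3) by blast
  then have "(u, y) \<in> E ^^ Suc (gdist E u x)"
    using relpow_Suc_I[OF relpow_gdist[OF assms(1,2)] assms(3)] by blast
  then show ?thesis using gdist_le_relpow by (metis Suc_eq_plus1)
qed

lemma gdist_step_towards:
  assumes "connected_graph V E" "v \<in> V" "w \<in> V" "v \<noteq> w"
  obtains v' where "(v, v') \<in> E" "gdist E v' w + 1 \<le> gdist E v w"
proof -
  obtain d where d: "gdist E v w = Suc d"
    using gdist_eq_0_iff[OF assms(1-3)] assms(4) not0_implies_Suc by blast
  then obtain v' where "(v, v') \<in> E" "(v', w) \<in> E ^^ d"
    using relpow_gdist[OF assms(1-3)] relpow_Suc_E2 by metis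
  moreover have "gdist E v' w \<le> d" by (rule gdist_le_relpow[OF calculation(2)])
  ultimately show ?thesis using that d by simp
qed

lemma exists_neighbour:
  assumes "connected_graph V E" "card V \<ge> 2" "g \<in> V"
  obtains a where "(g, a) \<in> E"
proof -
  have "\<not> V \<subseteq> {g}"
  proof
    assume "V \<subseteq> {g}"
    then have "card V \<le> 1" using card_mono[of "{g}" V] by simp
    then show False using assms(2) by simp
  qed
  then obtain v where v: "v \<in> V" "v \<noteq> g" by blast
  then have "(g, v) \<in> E\<^sup>*" using assms(1,3) unfolding connected_graph_def by blast
  then show ?thesis using v(2) that by (cases rule: converse_rtranclE) auto
qed

section \<open>Strong resolving sets\<close>

lemma mutually_max_distant_commute:
  "mutually_max_distant V E u v \<longleftrightarrow> mutually_max_distant V E v u"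
  unfolding mutually_max_distant_def by auto

lemma sr_edges_iff: "(u, v) \<in> sr_edges V E \<longleftrightarrow> mutually_max_distant V E u v"
  unfolding sr_edges_def boundary_def mutually_max_distant_def by auto

lemma sym_sr_edges: "sym (sr_edges V E)"
  unfolding sym_def sr_edges_iff by (simp add: mutually_max_distant_commute)

lemma boundary_subset: "boundary V E \<subseteq> V"
  unfolding boundary_def by blast

lemma sr_edges_subset: "sr_edges V E \<subseteq> boundary V E \<times> boundary V E"
  unfolding sr_edges_def by blast

lemma max_distant_geodesic_end:
  assumes c: "connected_graph V E" and V: "u \<in> V" "v \<in> V" "w \<in> V"
    and "max_distant V E v u" and geodesic: "gdist E u v + gdist E v w = gdist E u w"
  shows "v = w"
proof (rule ccontr)
  assume "v \<noteq> w"
  then obtain v' where v': "(v, v') \<in> E" "gdist E v' w + 1 \<le> gdist E v w"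
    using gdist_step_towards[OF c V(2,3)] by blast
  have "v' \<in> V" using connected_graph_edges_subset[OF c] v'(1) by blast
  have "gdist E u w \<le> gdist E u v' + gdist E v' w" by (rule gdist_triangle[OF c V(1) \<open>v' \<in> V\<close> V(3)])
  moreover have "gdist E u v' \<le> gdist E v u"
    using \<open>max_distant V E v u\<close> v'(1) unfolding max_distant_def by blast
  ultimately show False using geodesic v'(2) gdist_commute[OF c V(2,1)] by linarith
qed

lemma strongly_resolves_mutually_max_distant:
  assumes c: "connected_graph V E" and m: "mutually_max_distant V E u v"
    and "w \<in> V" "strongly_resolves V E w u v"
  shows "w = u \<or> w = v"
proof -
  have V: "u \<in> V" "v \<in> V" and md: "max_distant V E u v" "max_distant V E v u"
    using m unfolding mutually_max_distant_def by auto
  from assms(4) consider "v \<in> interval V E u w" | "u \<in> interval V E v w"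
    unfolding strongly_resolves_def by blast
  then show ?thesis
    using max_distant_geodesic_end[OF c V \<open>w \<in> V\<close> md(2)]
      max_distant_geodesic_end[OF c V(2,1) \<open>w \<in> V\<close> md(1)]
    unfolding interval_def by cases auto
qed

text \<open>If u and v lie, in this order, on a shortest x-y path, and x is chosen as far from y as
  possible subject to this, then x is maximally distant from y: a neighbour z of x farther from y
  would again have u and v on a shortest z-y path.\<close>
lemma max_distant_if_maximal_geodesic:
  assumes c: "connected_graph V E" and V: "u \<in> V" "v \<in> V" "x \<in> V" "y \<in> V"
    and eq: "gdist E x y = gdist E x u + gdist E u v + gdist E v y"
    and maximal: "\<And>x'. x' \<in> V \<Longrightarrow> gdist E x' y = gdist E x' u + gdist E u v + gdist E v y
               \<Longrightarrow> gdist E x' y \<le> gdist E x y"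
  shows "max_distant V E x y"
  unfolding max_distant_def
proof (intro allI impI)
  fix z assume z: "(x, z) \<in> E"
  have "z \<in> V" using connected_graph_edges_subset[OF c] z by blast
  show "gdist E y z \<le> gdist E x y"
  proof (rule ccontr)
    assume far: "\<not> ?thesis"
    have "gdist E y z \<le> gdist E y x + 1" by (rule gdist_edge_le[OF c V(4) z])
    moreover have "gdist E u z \<le> gdist E u x + 1" by (rule gdist_edge_le[OF c V(1) z])
    moreover have "gdist E z y \<le> gdist E z u + gdist E u y" by (rule gdist_triangle[OF c \<open>z \<in> V\<close> V(1,4)])
    moreover have "gdist E u y \<le> gdist E u v + gdist E v y" by (rule gdist_triangle[OF c V(1,2,4)])
    ultimately have "gdist E z y = gdist E z u + gdist E u v + gdist E v y"
      using eq far gdist_commute[OF c V(4) \<open>z \<in> V\<close>] gdist_commute[OF c V(4,3)]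
        gdist_commute[OF c V(1,3)] gdist_commute[OF c V(1) \<open>z \<in> V\<close>] by linarith
    then have "gdist E z y \<le> gdist E x y" by (rule maximal[OF \<open>z \<in> V\<close>])
    then show False using far gdist_commute[OF c V(4) \<open>z \<in> V\<close>] by linarith
  qed
qed

lemma mutually_max_distant_extension:
  assumes c: "connected_graph V E" and uv: "u \<in> V" "v \<in> V" "u \<noteq> v"
  obtains x y where "mutually_max_distant V E x y" "u \<in> interval V E v x" "v \<in> interval V E u y"
proof -
  note commute = gdist_commute[OF c]
  define C where "C = {(x, y) \<in> V \<times> V. gdist E x y = gdist E x u + gdist E u v + gdist E v y}"
  have "finite C" unfolding C_def using connected_graph_finite[OF c]
    by (auto intro: finite_subset[of _ "V \<times> V"])
  moreover have "(u, v) \<in> C" unfolding C_def using uv by simp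
  ultimately have "Max (case_prod (gdist E) ` C) \<in> case_prod (gdist E) ` C"
    by (intro Max_in) auto
  then obtain x y where "(x, y) \<in> C" and max_eq: "gdist E x y = Max (case_prod (gdist E) ` C)"
    by auto
  have maximal: "gdist E x' y' \<le> gdist E x y" if "(x', y') \<in> C" for x' y'
    unfolding max_eq using \<open>finite C\<close> that by (intro Max_ge) force+
  from \<open>(x, y) \<in> C\<close> have xy: "x \<in> V" "y \<in> V"
    and eq: "gdist E x y = gdist E x u + gdist E u v + gdist E v y"
    unfolding C_def by auto
  have eq': "gdist E y x = gdist E y v + gdist E v u + gdist E u x"
    using eq commute[OF xy] commute[OF xy(1) uv(1)] commute[OF uv(1,2)] commute[OF uv(2) xy(2)]
    by linarith
  have "max_distant V E x y"
    by (rule max_distant_if_maximal_geodesic[OF c uv(1,2) xy eq])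
      (use maximal xy(2) in \<open>auto simp: C_def\<close>)
  moreover have "max_distant V E y x"
  proof (rule max_distant_if_maximal_geodesic[OF c uv(2,1) xy(2,1) eq'])
    fix y' assume "y' \<in> V" "gdist E y' x = gdist E y' v + gdist E v u + gdist E u x"
    then have "(x, y') \<in> C" unfolding C_def
      using xy(1) commute[OF xy(1) \<open>y' \<in> V\<close>] commute[OF xy(1) uv(1)] commute[OF uv(1,2)]
        commute[OF uv(2) \<open>y' \<in> V\<close>] by auto
    then show "gdist E y' x \<le> gdist E y x"
      using maximal commute[OF xy(1) \<open>y' \<in> V\<close>] commute[OF xy] by fastforce
  qed
  moreover have "x \<noteq> y" using eq gdist_eq_0_iff[OF c uv(1,2)] uv(3) by auto
  moreover have "u \<in> interval V E v x"
    using eq uv(1) gdist_triangle[OF c xy(1) uv(1,2)] gdist_triangle[OF c xy(1) uv(2) xy(2)]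
      commute[OF xy(1) uv(1)] commute[OF xy(1) uv(2)] commute[OF uv(1,2)]
    unfolding interval_def by simp
  moreover have "v \<in> interval V E u y"
    using eq uv(2) gdist_triangle[OF c uv(1,2) xy(2)] gdist_triangle[OF c xy(1) uv(1) xy(2)]
    unfolding interval_def by simp
  ultimately show ?thesis using that xy unfolding mutually_max_distant_def by blast
qed

lemma strong_resolving_set_iff_vertex_cover:
  assumes c: "connected_graph V E"
  shows "strong_resolving_set V E S \<longleftrightarrow> vertex_cover V (sr_edges V E) S"
proof
  assume S: "strong_resolving_set V E S"
  then have "S \<subseteq> V" unfolding strong_resolving_set_def by blast
  moreover have "u \<in> S \<or> v \<in> S" if "(u, v) \<in> sr_edges V E" for u v
  proof -
    have m: "mutually_max_distant V E u v" using that unfolding sr_edges_iff .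
    then have "u \<in> V" "v \<in> V" "u \<noteq> v" unfolding mutually_max_distant_def by auto
    then obtain w where "w \<in> S" "strongly_resolves V E w u v"
      using S unfolding strong_resolving_set_def by blast
    then show "u \<in> S \<or> v \<in> S"
      using strongly_resolves_mutually_max_distant[OF c m] \<open>S \<subseteq> V\<close> by blast
  qed
  ultimately show "vertex_cover V (sr_edges V E) S" unfolding vertex_cover_def by blast
next
  assume S: "vertex_cover V (sr_edges V E) S"
  show "strong_resolving_set V E S"
    unfolding strong_resolving_set_def
  proof (intro conjI ballI impI)
    show "S \<subseteq> V" using S unfolding vertex_cover_def by blast
    fix u v assume "u \<in> V" "v \<in> V" "u \<noteq> v"
    then obtain x y where "mutually_max_distant V E x y" "u \<in> interval V E v x" "v \<in> interval V E u y"
      using mutually_max_distant_extension[OF c] by blast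
    moreover have "(x, y) \<in> sr_edges V E" using calculation(1) unfolding sr_edges_iff .
    then have "x \<in> S \<or> y \<in> S" using S unfolding vertex_cover_def by blast
    ultimately show "\<exists>w\<in>S. strongly_resolves V E w u v"
      unfolding strongly_resolves_def by blast
  qed
qed

lemma strong_metric_dim_eq_cover_number:
  assumes "connected_graph V E" "sr_edges V E \<subseteq> B \<times> B" "B \<subseteq> V"
  shows "strong_metric_dim V E = cover_number B (sr_edges V E)"
proof -
  have "strong_metric_dim V E = cover_number V (sr_edges V E)"
    unfolding strong_metric_dim_def cover_number_def strong_resolving_set_iff_vertex_cover[OF assms(1)] ..
  also have "\<dots> = cover_number B (sr_edges V E)"
    using connected_graph_finite[OF assms(1)] assms(3,2) by (rule cover_number_restrict)
  finally show ?thesis .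
qed

section \<open>Cartesian products\<close>

lemma relpow_cart_edges_left:
  assumes "EG \<subseteq> VG \<times> VG" "g \<in> VG" "h \<in> VH" "(g, g') \<in> EG ^^ a"
  shows "((g, h), (g', h)) \<in> cart_edges VG EG VH EH ^^ a"
  using assms(4)
proof (induction a arbitrary: g')
  case (Suc a)
  then obtain y where "(g, y) \<in> EG ^^ a" "(y, g') \<in> EG" by auto
  moreover from this(2) have "((y, h), (g', h)) \<in> cart_edges VG EG VH EH"
    using assms(1,3) unfolding cart_edges_def by auto
  ultimately show ?case using Suc.IH by auto
qed simp

lemma relpow_cart_edges_right:
  assumes "EH \<subseteq> VH \<times> VH" "g \<in> VG" "h \<in> VH" "(h, h') \<in> EH ^^ b"
  shows "((g, h), (g, h')) \<in> cart_edges VG EG VH EH ^^ b"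
  using assms(4)
proof (induction b arbitrary: h')
  case (Suc b)
  then obtain y where "(h, y) \<in> EH ^^ b" "(y, h') \<in> EH" by auto
  moreover from this(2) have "((g, y), (g, h')) \<in> cart_edges VG EG VH EH"
    using assms(1,2) unfolding cart_edges_def by auto
  ultimately show ?case using Suc.IH by auto
qed simp

lemma relpow_cart_edgesD:
  "((g, h), (g', h')) \<in> cart_edges VG EG VH EH ^^ n \<Longrightarrow>
     \<exists>a b. a + b = n \<and> (g, g') \<in> EG ^^ a \<and> (h, h') \<in> EH ^^ b"
proof (induction n arbitrary: g' h')
  case (Suc n)
  then obtain g1 h1 where z: "((g, h), (g1, h1)) \<in> cart_edges VG EG VH EH ^^ n"
    "((g1, h1), (g', h')) \<in> cart_edges VG EG VH EH" by auto
  obtain a b where ab: "a + b = n" "(g, g1) \<in> EG ^^ a" "(h, h1) \<in> EH ^^ b"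
    using Suc.IH[OF z(1)] by blast
  from z(2) have "(g1 = g' \<and> (h1, h') \<in> EH) \<or> (h1 = h' \<and> (g1, g') \<in> EG)"
    unfolding cart_edges_def by auto
  then show ?case
  proof
    assume "g1 = g' \<and> (h1, h') \<in> EH"
    then show ?thesis using ab by (intro exI[of _ a] exI[of _ "Suc b"]) auto
  next
    assume "h1 = h' \<and> (g1, g') \<in> EG"
    then show ?thesis using ab by (intro exI[of _ "Suc a"] exI[of _ b]) auto
  qed
qed simp

lemma relpow_cart_edges_gdist:
  assumes cG: "connected_graph VG EG" and cH: "connected_graph VH EH"
    and V: "g \<in> VG" "g' \<in> VG" "h \<in> VH" "h' \<in> VH"
  shows "((g, h), (g', h')) \<in> cart_edges VG EG VH EH ^^ (gdist EG g g' + gdist EH h h')"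
  unfolding relpow_add
  using relpow_cart_edges_left[OF connected_graph_edges_subset[OF cG] V(1,3) relpow_gdist[OF cG V(1,2)]]
    relpow_cart_edges_right[OF connected_graph_edges_subset[OF cH] V(2,3) relpow_gdist[OF cH V(3,4)]]
  by blast

lemma connected_graph_cart:
  assumes cG: "connected_graph VG EG" and cH: "connected_graph VH EH"
  shows "connected_graph (VG \<times> VH) (cart_edges VG EG VH EH)"
  unfolding connected_graph_def
proof (intro conjI ballI)
  show "graph (VG \<times> VH) (cart_edges VG EG VH EH)"
    using cG cH unfolding connected_graph_def graph_def cart_edges_def sym_def irrefl_def by auto
  fix p q assume "p \<in> VG \<times> VH" "q \<in> VG \<times> VH"
  then show "(p, q) \<in> (cart_edges VG EG VH EH)\<^sup>*"
    using relpow_cart_edges_gdist[OF cG cH] relpow_imp_rtrancl by (metis mem_Times_iff prod.collapse)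
qed

lemma gdist_cart:
  assumes cG: "connected_graph VG EG" and cH: "connected_graph VH EH"
    and V: "g \<in> VG" "g' \<in> VG" "h \<in> VH" "h' \<in> VH"
  shows "gdist (cart_edges VG EG VH EH) (g, h) (g', h') = gdist EG g g' + gdist EH h h'"
proof (rule antisym)
  let ?P = "cart_edges VG EG VH EH"
  show "gdist ?P (g, h) (g', h') \<le> gdist EG g g' + gdist EH h h'"
    using relpow_cart_edges_gdist[OF assms] by (rule gdist_le_relpow)
  have path: "((g, h), (g', h')) \<in> ?P ^^ gdist ?P (g, h) (g', h')"
    using V by (intro relpow_gdist[OF connected_graph_cart[OF cG cH]]) auto
  obtain a b where "a + b = gdist ?P (g, h) (g', h')" "(g, g') \<in> EG ^^ a" "(h, h') \<in> EH ^^ b"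
    using relpow_cart_edgesD[OF path] by blast
  then show "gdist EG g g' + gdist EH h h' \<le> gdist ?P (g, h) (g', h')"
    using gdist_le_relpow add_mono by metis
qed

lemma max_distant_cart_iff:
  assumes cG: "connected_graph VG EG" and cH: "connected_graph VH EH"
    and V: "g \<in> VG" "g' \<in> VG" "h \<in> VH" "h' \<in> VH"
  shows "max_distant (VG \<times> VH) (cart_edges VG EG VH EH) (g, h) (g', h') \<longleftrightarrow>
         max_distant VG EG g g' \<and> max_distant VH EH h h'"
proof
  let ?P = "cart_edges VG EG VH EH"
  note dist = gdist_cart[OF cG cH]
  assume m: "max_distant (VG \<times> VH) ?P (g, h) (g', h')"
  show "max_distant VG EG g g' \<and> max_distant VH EH h h'"
    unfolding max_distant_def
  proof (intro conjI allI impI)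
    fix a assume a: "(g, a) \<in> EG"
    then have "a \<in> VG" using connected_graph_edges_subset[OF cG] by blast
    moreover have "((g, h), (a, h)) \<in> ?P" using a V calculation unfolding cart_edges_def by auto
    then have "gdist ?P (g', h') (a, h) \<le> gdist ?P (g, h) (g', h')"
      using m unfolding max_distant_def by blast
    ultimately show "gdist EG g' a \<le> gdist EG g g'"
      using dist[OF V(2) \<open>a \<in> VG\<close> V(4,3)] dist[OF V] gdist_commute[OF cH V(3,4)] by linarith
  next
    fix b assume b: "(h, b) \<in> EH"
    then have "b \<in> VH" using connected_graph_edges_subset[OF cH] by blast
    moreover have "((g, h), (g, b)) \<in> ?P" using b V calculation unfolding cart_edges_def by auto
    then have "gdist ?P (g', h') (g, b) \<le> gdist ?P (g, h) (g', h')"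
      using m unfolding max_distant_def by blast
    ultimately show "gdist EH h' b \<le> gdist EH h h'"
      using dist[OF V(2,1) V(4) \<open>b \<in> VH\<close>] dist[OF V] gdist_commute[OF cG V(1,2)] by linarith
  qed
next
  let ?P = "cart_edges VG EG VH EH"
  note dist = gdist_cart[OF cG cH]
  assume m: "max_distant VG EG g g' \<and> max_distant VH EH h h'"
  show "max_distant (VG \<times> VH) ?P (g, h) (g', h')"
    unfolding max_distant_def
  proof (intro allI impI)
    fix w assume w: "((g, h), w) \<in> ?P"
    then obtain c d where wcd: "w = (c, d)" "c \<in> VG" "d \<in> VH"
      and step: "(c = g \<and> (h, d) \<in> EH) \<or> (d = h \<and> (g, c) \<in> EG)"
      unfolding cart_edges_def by auto
    have "gdist ?P (g', h') w = gdist EG g' c + gdist EH h' d"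
      using dist[OF V(2) wcd(2) V(4) wcd(3)] wcd(1) by simp
    then show "gdist ?P (g', h') w \<le> gdist ?P (g, h) (g', h')"
      using step m dist[OF V] gdist_commute[OF cG V(1,2)] gdist_commute[OF cH V(3,4)]
      unfolding max_distant_def by fastforce
  qed
qed

lemma not_max_distant_self:
  assumes c: "connected_graph V E" and "card V \<ge> 2" "g \<in> V"
  shows "\<not> max_distant V E g g"
proof
  assume m: "max_distant V E g g"
  obtain a where a: "(g, a) \<in> E" using exists_neighbour[OF assms] .
  have "a \<in> V" using connected_graph_edges_subset[OF c] a by blast
  have "gdist E g a = 0" using m a unfolding max_distant_def by fastforce
  then have "g = a" using gdist_eq_0_iff[OF c assms(3) \<open>a \<in> V\<close>] by simp
  moreover have "irrefl E" using c unfolding connected_graph_def graph_def by blast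
  ultimately show False using a unfolding irrefl_def by blast
qed

lemma mutually_max_distant_cart_iff:
  assumes cG: "connected_graph VG EG" and cH: "connected_graph VH EH"
    and "card VG \<ge> 2" "card VH \<ge> 2"
  shows "mutually_max_distant (VG \<times> VH) (cart_edges VG EG VH EH) (g, h) (g', h') \<longleftrightarrow>
         mutually_max_distant VG EG g g' \<and> mutually_max_distant VH EH h h'"
proof (cases "g \<in> VG \<and> g' \<in> VG \<and> h \<in> VH \<and> h' \<in> VH")
  case True
  then have V: "g \<in> VG" "g' \<in> VG" "h \<in> VH" "h' \<in> VH" by auto
  \<comment> \<open>the product only requires (g, h) \<noteq> (g', h'), the factors require g \<noteq> g' and h \<noteq> h'\<close>
  have "g = g' \<Longrightarrow> \<not> max_distant VG EG g g'" "h = h' \<Longrightarrow> \<not> max_distant VH EH h h'"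
    using not_max_distant_self[OF cG assms(3) V(1)] not_max_distant_self[OF cH assms(4) V(3)] by auto
  then show ?thesis
    unfolding mutually_max_distant_def
    using max_distant_cart_iff[OF cG cH V] max_distant_cart_iff[OF cG cH V(2,1,4,3)] V by auto
qed (auto simp: mutually_max_distant_def)

lemma sr_edges_cart:
  assumes "connected_graph VG EG" "connected_graph VH EH" "card VG \<ge> 2" "card VH \<ge> 2"
  shows "sr_edges (VG \<times> VH) (cart_edges VG EG VH EH) = tensor_rel (sr_edges VG EG) (sr_edges VH EH)"
  unfolding tensor_rel_def
  by (auto simp: sr_edges_iff mutually_max_distant_cart_iff[OF assms])

theorem theorem14:
  fixes VG :: "'a set" and EG :: "('a \<times> 'a) set" and VH :: "'b set" and EH :: "('b \<times> 'b) set"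
  assumes "connected_graph VG EG" and "connected_graph VH EH"
    and "card VG \<ge> 2" and "card VH \<ge> 2"
    and "vertex_transitive (boundary VG EG) (sr_edges VG EG)"
    and "vertex_transitive (boundary VH EH) (sr_edges VH EH)"
  shows "strong_metric_dim (VG \<times> VH) (cart_edges VG EG VH EH) =
           min (card (boundary VG EG) * strong_metric_dim VH EH)
               (card (boundary VH EH) * strong_metric_dim VG EG)"
proof -
  let ?BG = "boundary VG EG" and ?BH = "boundary VH EH"
  let ?SG = "sr_edges VG EG" and ?SH = "sr_edges VH EH"
  have "finite ?BG" "finite ?BH"
    using assms(1,2) boundary_subset connected_graph_finite finite_subset by metis+
  have "?BG \<times> ?BH \<subseteq> VG \<times> VH" using boundary_subset by (rule Sigma_mono) (rule boundary_subset)
  then have "strong_metric_dim (VG \<times> VH) (cart_edges VG EG VH EH)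
      = cover_number (?BG \<times> ?BH) (tensor_rel ?SG ?SH)"
    using strong_metric_dim_eq_cover_number[OF connected_graph_cart[OF assms(1,2)]]
      tensor_rel_subset[OF sr_edges_subset sr_edges_subset]
    unfolding sr_edges_cart[OF assms(1-4)] by blast
  also have "\<dots> = min (card ?BG * cover_number ?BH ?SH) (card ?BH * cover_number ?BG ?SG)"
    using \<open>finite ?BG\<close> \<open>finite ?BH\<close> sym_sr_edges sym_sr_edges sr_edges_subset sr_edges_subset assms(5,6)
    by (rule cover_number_tensor_rel)
  also have "\<dots> = min (card ?BG * strong_metric_dim VH EH) (card ?BH * strong_metric_dim VG EG)"
    using strong_metric_dim_eq_cover_number[OF assms(1) sr_edges_subset boundary_subset]
      strong_metric_dim_eq_cover_number[OF assms(2) sr_edges_subset boundary_subset] by simp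
  finally show ?thesis .
qed

end
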